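(* Let $H_n=\sum_{j=1}^n\frac1j$, let $\gamma$ be the Euler–Mascheroni constant, $z^{\overline{k}} = z(z+1) \cdots (z + k -1)$ the rising factorial, and $G$ the Barnes $G$-function. For $k \in \{1, 2, \ldots\}$ and $x > 0$, $$\sum_{n = 1}^\infty \left(H_n - \log\sqrt[k]{(n + x - 1)^{\overline{k}}} -\gamma + \frac{x-2}{n} + \frac{k}{2n} \right) = \gamma\left( x + \frac{k}{2} - 1\right) + \frac{1 -\log (2 \pi )}{2} + \frac{1}{k}\log\left[\frac{G(x+k)}{G(x)}\right].$$
   Context: The Barnes $G$-function is the entire function $G(z+1) = (2\pi)^{z/2} e^{-\frac{z+z^2(1+\gamma)}{2}} \prod_{m=1}^\infty \left(1+\frac{z}{m}\right)^m e^{-z+\frac{z^2}{2m}}$; it satisfies $G(1)=1$ and $G(z+1)=\Gamma(z)G(z)$. *)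

theory Defs
  imports "HOL-Analysis.Analysis"
begin

text \<open>Barnes G-function, defined (as in the paper) through its Weierstrass product
  G(z+1) = (2 pi)^(z/2) exp(-(z + z^2 (1+gamma))/2) prod_{m>=1} (1+z/m)^m exp(-z + z^2/(2m)).
  Here barnes_G w is G(w), i.e. the formula with z = w - 1.\<close>

definition barnes_G :: "complex \<Rightarrow> complex" where
  "barnes_G w = (let z = w - 1 in
     (complex_of_real (2 * pi)) powr (z / 2)
     * exp (- (z + z^2 * (1 + euler_mascheroni)) / 2)
     * (\<Prod>m. (1 + z / of_nat (Suc m)) ^ (Suc m) * exp (- z + z^2 / (2 * of_nat (Suc m)))))"

end

theory Submission
  imports Defs "HOL-Real_Asymp.Real_Asymp"
begin

(*
  Taking logarithms in the Weierstrass product, log G(x+k) - log G(x) is an explicit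
  polynomial in x and k plus the convergent series of l(x+k-1, n) - l(x-1, n), where
  l(z, n) = n log (1 + z/n) - z + z^2/(2n) is the logarithm of the n-th factor.
  The n-th summand of the series in the theorem equals (l(x+k-1, n) - l(x-1, n))/k + D(n) - D(n-1)
  with D(M) = M (H_M - gamma - (1/k) log (M+x)^(k)), because (M+1+x)^(k) / (M+x)^(k) = (M+x+k)/(M+x).
  From H_M = gamma + log M + 1/(2M) + o(1/M) and
  log (M+x)^(k) = k log M + (kx + k(k-1)/2)/M + o(1/M) one gets D(M) --> 1/2 - x - (k-1)/2,
  so the series telescopes.
*)

definition barnes_ln_factor :: "real \<Rightarrow> nat \<Rightarrow> real" where
  "barnes_ln_factor z n = real n * ln (1 + z / real n) - z + z\<^sup>2 / (2 * real n)"

lemma barnes_ln_factor_bigo: "barnes_ln_factor z \<in> O(\<lambda>n. 1 / real n ^ 2)"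
  unfolding barnes_ln_factor_def power2_eq_square by real_asymp

lemma summable_barnes_ln_factor: "summable (\<lambda>m. barnes_ln_factor z (Suc m))"
proof -
  have "summable (\<lambda>n. norm (1 / real n ^ 2))"
    using inverse_power_summable[of 2, where ?'a = real] by (simp add: inverse_eq_divide)
  then have "summable (barnes_ln_factor z)"
    by (rule summable_comparison_test_bigo) (rule barnes_ln_factor_bigo)
  then show ?thesis
    by (simp add: summable_Suc_iff)
qed

lemma exp_barnes_ln_factor:
  assumes "n > 0" and "z > - real n"
  shows "exp (barnes_ln_factor z n) = (1 + z / real n) ^ n * exp (- z + z\<^sup>2 / (2 * real n))"
proof -
  have "1 + z / real n > 0"
    using assms by (simp add: field_simps)
  then have "exp (real n * ln (1 + z / real n)) = (1 + z / real n) ^ n"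
    by (simp add: exp_of_nat_mult)
  moreover have "barnes_ln_factor z n = real n * ln (1 + z / real n) + (- z + z\<^sup>2 / (2 * real n))"
    by (simp add: barnes_ln_factor_def)
  ultimately show ?thesis
    by (simp only: exp_add)
qed

lemma barnes_ln_factor_diff:
  assumes "n > 0" and "real n + a > 0" and "real n + b > 0"
  shows "barnes_ln_factor a n - barnes_ln_factor b n
           = real n * (ln (real n + a) - ln (real n + b)) - (a - b) + (a\<^sup>2 - b\<^sup>2) / (2 * real n)"
proof -
  have ln_shift: "ln (1 + c / real n) = ln (real n + c) - ln (real n)" if "real n + c > 0" for c
  proof -
    have "1 + c / real n = (real n + c) / real n"
      using assms by (simp add: field_simps)
    then show ?thesis
      using assms that by (simp add: ln_div)
  qed
  show ?thesis
    unfolding barnes_ln_factor_def ln_shift[OF assms(2)] ln_shift[OF assms(3)]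
    by (simp add: algebra_simps diff_divide_distrib)
qed

definition ln_barnes_G :: "real \<Rightarrow> real" where
  "ln_barnes_G w = (w - 1) / 2 * ln (2 * pi) - ((w - 1) + (w - 1)\<^sup>2 * (1 + euler_mascheroni)) / 2
                   + (\<Sum>m. barnes_ln_factor (w - 1) (Suc m))"

lemma barnes_G_of_real:
  assumes "w > 0"
  shows "barnes_G (complex_of_real w) = complex_of_real (exp (ln_barnes_G w))"
proof -
  define z where "z = w - 1"
  have factor: "(1 + complex_of_real z / of_nat (Suc m)) ^ Suc m
                  * exp (- complex_of_real z + (complex_of_real z)\<^sup>2 / (2 * of_nat (Suc m)))
                = exp (complex_of_real (barnes_ln_factor z (Suc m)))" for m
  proof -
    have "z > - real (Suc m)"
      using assms by (simp add: z_def)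
    then have "exp (complex_of_real (barnes_ln_factor z (Suc m)))
                 = complex_of_real ((1 + z / real (Suc m)) ^ Suc m * exp (- z + z\<^sup>2 / (2 * real (Suc m))))"
      by (simp only: exp_of_real exp_barnes_ln_factor zero_less_Suc)
    then show ?thesis
      by (simp add: of_real_exp)
  qed
  have "(\<Prod>m. exp (complex_of_real (barnes_ln_factor z (Suc m))))
          = exp (\<Sum>m. complex_of_real (barnes_ln_factor z (Suc m)))"
    by (rule prodinf_exp) (simp add: summable_barnes_ln_factor)
  also have "\<dots> = complex_of_real (exp (\<Sum>m. barnes_ln_factor z (Suc m)))"
    by (simp add: suminf_of_real summable_barnes_ln_factor flip: exp_of_real)
  finally have prod: "(\<Prod>m. exp (complex_of_real (barnes_ln_factor z (Suc m))))
                        = complex_of_real (exp (\<Sum>m. barnes_ln_factor z (Suc m)))" .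
  have powr: "complex_of_real (2 * pi) powr (complex_of_real z / 2) = complex_of_real (exp (z / 2 * ln (2 * pi)))"
    using powr_of_real[of "2 * pi" "z / 2"] by (simp add: powr_def)
  have exp_quadratic: "exp (- (complex_of_real z + (complex_of_real z)\<^sup>2 * (1 + euler_mascheroni)) / 2)
                 = complex_of_real (exp (- (z + z\<^sup>2 * (1 + euler_mascheroni)) / 2))"
    by (simp add: of_real_exp)
  have "barnes_G (complex_of_real w)
          = complex_of_real (exp (z / 2 * ln (2 * pi)) * exp (- (z + z\<^sup>2 * (1 + euler_mascheroni)) / 2)
                             * exp (\<Sum>m. barnes_ln_factor z (Suc m)))"
  proof -
    have shift: "complex_of_real w - 1 = complex_of_real z"
      by (simp add: z_def)
    show ?thesis
      unfolding barnes_G_def Let_def shift factor prod powr exp_quadratic by simp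
  qed
  also have "\<dots> = complex_of_real (exp (ln_barnes_G w))"
    unfolding ln_barnes_G_def z_def exp_add[symmetric] by (simp add: field_simps)
  finally show ?thesis .
qed

lemma Re_Ln_barnes_G_quotient:
  assumes "a > 0" and "b > 0"
  shows "Re (Ln (barnes_G (complex_of_real a) / barnes_G (complex_of_real b)))
           = (a - b) / 2 * ln (2 * pi) - ((a - b) + ((a - 1)\<^sup>2 - (b - 1)\<^sup>2) * (1 + euler_mascheroni)) / 2
             + (\<Sum>m. barnes_ln_factor (a - 1) (Suc m) - barnes_ln_factor (b - 1) (Suc m))"
proof -
  have "Re (Ln (barnes_G (complex_of_real a) / barnes_G (complex_of_real b))) = ln_barnes_G a - ln_barnes_G b"
    using assms by (simp add: barnes_G_of_real flip: exp_diff of_real_divide Ln_of_real)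
  moreover have "(\<Sum>m. barnes_ln_factor (a - 1) (Suc m) - barnes_ln_factor (b - 1) (Suc m))
                   = (\<Sum>m. barnes_ln_factor (a - 1) (Suc m)) - (\<Sum>m. barnes_ln_factor (b - 1) (Suc m))"
    by (intro suminf_diff[symmetric] summable_barnes_ln_factor)
  ultimately show ?thesis
    by (simp add: ln_barnes_G_def algebra_simps diff_divide_distrib)
qed

lemma tendsto_mult_harm_minus_ln:
  "(\<lambda>M. real M * (harm M - euler_mascheroni - ln (real M))) \<longlonglongrightarrow> 1 / 2"
proof (rule tendsto_sandwich)
  let ?L = "\<lambda>M::nat. real M * (ln (real M + 1) - ln (real M))"
  have "\<forall>\<^sub>F M in sequentially.
          - 1 / 2 + ?L M \<le> real M * (harm M - euler_mascheroni - ln (real M))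
          \<and> real M * (harm M - euler_mascheroni - ln (real M)) \<le> - real M / (2 * (real M + 1)) + ?L M"
    using eventually_ge_at_top[of "1::nat"]
  proof eventually_elim
    case (elim M)
    define d where "d = harm M - euler_mascheroni - ln (real M + 1)"
    have lower: "- inverse (real (2 * M)) \<le> d" and upper: "d \<le> - inverse (real (2 * (M + 1)))"
      using euler_mascheroni_bounds[OF elim] by (auto simp: d_def add.commute)
    have "real M * (- inverse (real (2 * M))) \<le> real M * d"
      and "real M * d \<le> real M * (- inverse (real (2 * (M + 1))))"
      using mult_left_mono[OF lower, of "real M"] mult_left_mono[OF upper, of "real M"] by simp_all
    moreover have "real M * (harm M - euler_mascheroni - ln (real M)) = real M * d + ?L M"
      by (simp add: d_def algebra_simps)
    ultimately show ?case
      using elim by (simp add: field_simps)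
  qed
  then show "\<forall>\<^sub>F M in sequentially. - 1 / 2 + ?L M \<le> real M * (harm M - euler_mascheroni - ln (real M))"
    and "\<forall>\<^sub>F M in sequentially. real M * (harm M - euler_mascheroni - ln (real M)) \<le> - real M / (2 * (real M + 1)) + ?L M"
    by (auto elim: eventually_mono)
  show "(\<lambda>M. - 1 / 2 + ?L M) \<longlonglongrightarrow> 1 / 2"
    and "(\<lambda>M. - real M / (2 * (real M + 1)) + ?L M) \<longlonglongrightarrow> 1 / 2"
    by real_asymp+
qed

lemma ln_pochhammer_eq_sum:
  assumes "y > 0"
  shows "ln (pochhammer y k) = (\<Sum>j<k. ln (y + real j))"
  unfolding pochhammer_prod using assms
  by (subst ln_prod) (auto simp: atLeast0LessThan add_pos_nonneg)

lemma ln_pochhammer_shift: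
  assumes "y > 0"
  shows "ln (pochhammer (y + 1) k) = ln (pochhammer y k) + ln (y + real k) - ln y"
proof -
  have "y * pochhammer (y + 1) k = (y + real k) * pochhammer y k"
    using pochhammer_rec[of y k] pochhammer_rec'[of y k] by simp
  then have "ln (y * pochhammer (y + 1) k) = ln ((y + real k) * pochhammer y k)"
    by simp
  moreover have "pochhammer (y + 1) k > 0" and "pochhammer y k > 0"
    using assms by (simp_all add: pochhammer_pos)
  ultimately show ?thesis
    using assms by (simp add: ln_mult)
qed

lemma tendsto_mult_ln_pochhammer:
  assumes "x > 0"
  shows "(\<lambda>M. real M * (ln (pochhammer (real M + x) k) - real k * ln (real M)))
           \<longlonglongrightarrow> real k * x + real k * (real k - 1) / 2"
proof -
  have "(\<lambda>M. real M * (ln (real M + (x + real j)) - ln (real M))) \<longlonglongrightarrow> x + real j" for j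
    by real_asymp
  then have "(\<lambda>M. \<Sum>j<k. real M * (ln (real M + (x + real j)) - ln (real M))) \<longlonglongrightarrow> (\<Sum>j<k. x + real j)"
    by (intro tendsto_sum)
  moreover have "(\<Sum>j<k. x + real j) = real k * x + real k * (real k - 1) / 2"
    by (induction k) (simp_all add: field_simps)
  moreover have "(\<Sum>j<k. real M * (ln (real M + (x + real j)) - ln (real M)))
                   = real M * (ln (pochhammer (real M + x) k) - real k * ln (real M))" for M
  proof -
    have "ln (pochhammer (real M + x) k) = (\<Sum>j<k. ln (real M + (x + real j)))"
      using assms by (simp add: ln_pochhammer_eq_sum add.assoc)
    then show ?thesis
      by (simp add: sum_subtractf right_diff_distrib sum_distrib_left)
  qed
  ultimately show ?thesis
    by simp
qed

definition harm_pochhammer_gap :: "nat \<Rightarrow> real \<Rightarrow> nat \<Rightarrow> real" where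
  "harm_pochhammer_gap k x M =
     real M * (harm M - euler_mascheroni - ln (pochhammer (real M + x) k) / real k)"

lemma tendsto_harm_pochhammer_gap:
  assumes "k \<ge> 1" and "x > 0"
  shows "harm_pochhammer_gap k x \<longlonglongrightarrow> 1 / 2 - x - (real k - 1) / 2"
proof -
  have "(\<lambda>M. real M * (harm M - euler_mascheroni - ln (real M))
              - real M * (ln (pochhammer (real M + x) k) - real k * ln (real M)) / real k)
          \<longlonglongrightarrow> 1 / 2 - (real k * x + real k * (real k - 1) / 2) / real k"
    using assms
    by (intro tendsto_intros tendsto_mult_harm_minus_ln tendsto_mult_ln_pochhammer) auto
  moreover have "real M * (harm M - euler_mascheroni - ln (real M))
                   - real M * (ln (pochhammer (real M + x) k) - real k * ln (real M)) / real k
                 = harm_pochhammer_gap k x M" for M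
    using assms by (simp add: harm_pochhammer_gap_def field_simps)
  moreover have "(real k * x + real k * (real k - 1) / 2) / real k = x + (real k - 1) / 2"
    using assms by (simp add: field_simps)
  ultimately show ?thesis
    by (simp add: algebra_simps)
qed

lemma harm_ln_root_pochhammer_telescoping:
  assumes "k \<ge> 1" and "x > 0"
  shows "harm (Suc m) - ln (root k (pochhammer (real (Suc m) + x - 1) k)) - euler_mascheroni
           + (x - 2) / real (Suc m) + real k / (2 * real (Suc m))
         = (barnes_ln_factor (x + real k - 1) (Suc m) - barnes_ln_factor (x - 1) (Suc m)) / real k
           + (harm_pochhammer_gap k x (Suc m) - harm_pochhammer_gap k x m)"
proof -
  define n where "n = real (Suc m)"
  define P where "P = ln (pochhammer (real m + x) k)"
  define L where "L = ln (real m + x + real k) - ln (real m + x)"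
  have n_pos: "n > 0" and k_pos: "real k > 0"
    using assms by (simp_all add: n_def)
  have harm: "harm (Suc m) = harm m + 1 / n"
    by (simp add: n_def harm_Suc inverse_eq_divide)
  have root: "ln (root k (pochhammer (real (Suc m) + x - 1) k)) = P / real k"
    using assms by (simp add: P_def ln_root pochhammer_pos add.commute)
  have gap_Suc: "harm_pochhammer_gap k x (Suc m) = n * (harm m + 1 / n - euler_mascheroni - (P + L) / real k)"
    using ln_pochhammer_shift[of "real m + x" k] assms
    by (simp add: harm_pochhammer_gap_def harm n_def P_def L_def add_ac)
  have gap: "harm_pochhammer_gap k x m = (n - 1) * (harm m - euler_mascheroni - P / real k)"
    by (simp add: harm_pochhammer_gap_def n_def P_def)
  have factors: "barnes_ln_factor (x + real k - 1) (Suc m) - barnes_ln_factor (x - 1) (Suc m)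
                   = n * L - real k + ((x + real k - 1)\<^sup>2 - (x - 1)\<^sup>2) / (2 * n)"
    using barnes_ln_factor_diff[of "Suc m" "x + real k - 1" "x - 1"] assms
    by (simp add: n_def L_def add_ac)
  show ?thesis
    unfolding harm root gap_Suc gap factors unfolding n_def[symmetric]
    using n_pos k_pos by (simp add: field_simps power2_eq_square)
qed

theorem mainTheorem12:
  fixes k :: nat and x :: real
  assumes "k \<ge> 1" and "x > 0"
  shows "(\<lambda>m. let n = Suc m in
            harm n - ln (root k (pochhammer (real n + x - 1) k)) - euler_mascheroni
            + (x - 2) / real n + real k / (2 * real n))
         sums (euler_mascheroni * (x + real k / 2 - 1) + (1 - ln (2 * pi)) / 2
               + (1 / real k) * Re (Ln (barnes_G (complex_of_real (x + real k))
                                        / barnes_G (complex_of_real x))))"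
proof -
  define g where "g = (\<lambda>m. (barnes_ln_factor (x + real k - 1) (Suc m) - barnes_ln_factor (x - 1) (Suc m)) / real k)"
  define D where "D = harm_pochhammer_gap k x"
  have "g sums suminf g"
    unfolding g_def by (intro summable_sums summable_divide summable_diff summable_barnes_ln_factor)
  moreover have "(\<lambda>m. D (Suc m) - D m) sums (1 / 2 - x - (real k - 1) / 2 - D 0)"
    unfolding D_def using assms by (intro telescope_sums tendsto_harm_pochhammer_gap)
  ultimately have sums: "(\<lambda>m. let n = Suc m in
            harm n - ln (root k (pochhammer (real n + x - 1) k)) - euler_mascheroni
            + (x - 2) / real n + real k / (2 * real n))
         sums (suminf g + (1 / 2 - x - (real k - 1) / 2 - D 0))"
    unfolding Let_def D_def g_def harm_ln_root_pochhammer_telescoping[OF assms] by (rule sums_add)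
  have "Re (Ln (barnes_G (complex_of_real (x + real k)) / barnes_G (complex_of_real x)))
          = real k / 2 * ln (2 * pi) - (real k + real k * (2 * x + real k - 2) * (1 + euler_mascheroni)) / 2
            + real k * suminf g"
    using Re_Ln_barnes_G_quotient[of "x + real k" x] assms
    by (simp add: g_def suminf_divide summable_diff summable_barnes_ln_factor power2_eq_square algebra_simps)
  moreover have "D 0 = 0"
    by (simp add: D_def harm_pochhammer_gap_def)
  ultimately have "euler_mascheroni * (x + real k / 2 - 1) + (1 - ln (2 * pi)) / 2
                     + (1 / real k) * Re (Ln (barnes_G (complex_of_real (x + real k)) / barnes_G (complex_of_real x)))
                   = suminf g + (1 / 2 - x - (real k - 1) / 2 - D 0)"
    using assms by (simp add: field_simps)
  with sums show ?thesis
    by simp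
qed

end
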